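(* Let $R$ be a $\lambda$-ring and let $x\in R$ be an element which is both even (of some finite degree) and odd (of some finite degree). Then $\lambda^i(x)$ is nilpotent for every $i\ge 1$ (in particular $x=\lambda^1(x)$ is nilpotent), and $\lambda_t(x)$ is a unit of the polynomial ring $R[t]$.
   Context: A $\lambda$-ring means a special $\lambda$-ring in the sense of SGA6: a commutative ring $R$ with operations $\lambda^n:R\to R$ ($n\ge0$), $\lambda^0=1$, $\lambda^1=\mathrm{id}$, such that $\lambda_t(x)=\sum_n\lambda^n(x)t^n$ satisfies $\lambda_t(x+y)=\lambda_t(x)\lambda_t(y)$ together with the universal polynomial identities for $\lambda^n(xy)$ and $\lambda^m(\lambda^n(x))$. Set $\sigma_t(x)=\sum_n\sigma^n(x)t^n=\lambda_{-t}(x)^{-1}$. An element $x$ is even of degree $n$ if $\lambda_t(x)$ is a polynomial of degree $n$, and odd of degree $n$ if $\sigma_t(x)$ is a polynomial of degree $n$. *)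

theory Defs
  imports "HOL-Computational_Algebra.Polynomial_FPS"
begin

text \<open>Integer polynomials in countably many variables, represented as lists of
  terms (coefficient, exponent list); the term (c, [a0,...,ak]) is c * X0^a0 * ... * Xk^ak.\<close>
type_synonym zpoly = "(int \<times> nat list) list"

definition zpoly_eval :: "zpoly \<Rightarrow> (nat \<Rightarrow> 'a::comm_ring_1) \<Rightarrow> 'a" where
  "zpoly_eval P v = (\<Sum>(c, es)\<leftarrow>P. of_int c * (\<Prod>k<length es. v k ^ (es ! k)))"

definition esym :: "nat \<Rightarrow> 'i set \<Rightarrow> ('i \<Rightarrow> 'a::comm_ring_1) \<Rightarrow> 'a" where
  "esym k I a = (\<Sum>T\<in>{T. T \<subseteq> I \<and> card T = k}. prod a T)"

text \<open>P is (a representative of) the universal polynomial P_n: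
  coefficient of u^n in prod_{i,j<n} (1 + xi_i eta_j u), written in the elementary
  symmetric functions s_1..s_n of xi (variables 0..n-1) and t_1..t_n of eta
  (variables n..2n-1).  Identity over all integer points, which determines the
  polynomial identity.\<close>
definition is_P_prod :: "nat \<Rightarrow> zpoly \<Rightarrow> bool" where
  "is_P_prod n P \<longleftrightarrow> (\<forall>\<xi> \<eta> :: nat \<Rightarrow> int.
     zpoly_eval P (\<lambda>k. if k < n then esym (k+1) {..<n} \<xi>
                       else if k < 2*n then esym (k+1-n) {..<n} \<eta> else 0)
     = esym n ({..<n} \<times> {..<n}) (\<lambda>(i,j). \<xi> i * \<eta> j))"

text \<open>P is (a representative of) the universal polynomial P_{m,n}:
  coefficient of u^m in prod_{i_1<...<i_n} (1 + xi_{i_1}...xi_{i_n} u),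
  written in the elementary symmetric functions s_1..s_{mn} of xi_1..xi_{mn}.\<close>
definition is_P_comp :: "nat \<Rightarrow> nat \<Rightarrow> zpoly \<Rightarrow> bool" where
  "is_P_comp m n P \<longleftrightarrow> (\<forall>\<xi> :: nat \<Rightarrow> int.
     zpoly_eval P (\<lambda>k. if k < m*n then esym (k+1) {..<m*n} \<xi> else 0)
     = esym m {S. S \<subseteq> {..<m*n} \<and> card S = n} (\<lambda>S. prod \<xi> S))"

definition lambda_ring :: "(nat \<Rightarrow> 'a::comm_ring_1 \<Rightarrow> 'a) \<Rightarrow> bool" where
  "lambda_ring lam \<longleftrightarrow>
     (\<forall>x. lam 0 x = 1) \<and> (\<forall>x. lam 1 x = x) \<and>
     (\<forall>n x y. lam n (x + y) = (\<Sum>i\<le>n. lam i x * lam (n - i) y)) \<and>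
     (\<forall>n\<ge>2. lam n 1 = 0) \<and>
     (\<forall>n P x y. is_P_prod n P \<longrightarrow>
        lam n (x * y) = zpoly_eval P (\<lambda>k. if k < n then lam (k+1) x
                          else if k < 2*n then lam (k+1-n) y else 0)) \<and>
     (\<forall>m n P x. is_P_comp m n P \<longrightarrow>
        lam m (lam n x) = zpoly_eval P (\<lambda>k. if k < m*n then lam (k+1) x else 0))"

definition lambda_t :: "(nat \<Rightarrow> 'a::comm_ring_1 \<Rightarrow> 'a) \<Rightarrow> 'a \<Rightarrow> 'a fps" where
  "lambda_t lam x = Abs_fps (\<lambda>n. lam n x)"

definition lambda_negt :: "(nat \<Rightarrow> 'a::comm_ring_1 \<Rightarrow> 'a) \<Rightarrow> 'a \<Rightarrow> 'a fps" where
  "lambda_negt lam x = Abs_fps (\<lambda>n. (-1)^n * lam n x)"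

definition even_deg :: "(nat \<Rightarrow> 'a::comm_ring_1 \<Rightarrow> 'a) \<Rightarrow> 'a \<Rightarrow> nat \<Rightarrow> bool" where
  "even_deg lam x n \<longleftrightarrow> (\<exists>p. degree p = n \<and> fps_of_poly p = lambda_t lam x)"

text \<open>x is odd of degree n: sigma_t(x) = lambda_{-t}(x)^{-1} is a polynomial of degree n,
  i.e. the inverse of lambda_{-t}(x) in R[[t]] is a polynomial of degree n.\<close>
definition odd_deg :: "(nat \<Rightarrow> 'a::comm_ring_1 \<Rightarrow> 'a) \<Rightarrow> 'a \<Rightarrow> nat \<Rightarrow> bool" where
  "odd_deg lam x n \<longleftrightarrow> (\<exists>q. degree q = n \<and> fps_of_poly q * lambda_negt lam x = 1)"

end

theory Submission
  imports Defs
begin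

text \<open>
  If x is even, then
  lambda_t(x) = p(t) for a polynomial p; if x is also odd, then lambda_{-t}(x) =
  p(-t) has a polynomial inverse q, so p(-t) and hence p(t) is a unit of R[t].
  The rest is the classical fact that every non-constant coefficient of a unit
  of R[t] is nilpotent, proved by induction on the degree:
  (1) a unit plus a nilpotent element is a unit;
  (2) a unit f = p of positive degree has nilpotent leading coefficient a
      (if f g = 1, one shows a^k kills the top k coefficients of g);
  (3) removing the leading term a t^n from f keeps it a unit by (1) and
      lowers the degree, so induction gives (2) for all coefficients.
  Finally the substitution t \<mapsto> -t is an involution of R[t] and
  transports units, which connects lambda_t(x) and lambda_{-t}(x).
\<close>

definition nilpotent :: "'a::comm_ring_1 \<Rightarrow> bool" where
  "nilpotent a \<longleftrightarrow> (\<exists>k. a ^ k = 0)"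

text \<open>A unit perturbed by a nilpotent element stays a unit: u + N = u (1 - M)
  with M = -u^{-1} N nilpotent, and 1 - M is inverted by a finite geometric sum.\<close>
lemma unit_plus_nilpotent:
  fixes u N :: "'a::comm_ring_1"
  assumes "u dvd 1" and "nilpotent N"
  shows "(u + N) dvd 1"
proof -
  obtain k where Nk: "N ^ k = 0" using assms(2) unfolding nilpotent_def by blast
  obtain v where v: "1 = u * v" using assms(1) by (auto elim: dvdE)
  define M where "M = - (v * N)"
  have "M ^ k = 0" unfolding M_def by (simp add: power_minus' power_mult_distrib Nk)
  hence "1 = (1 - M) * (\<Sum>i<k. M ^ i)" using one_diff_power_eq[of M k] by simp
  hence "(1 - M) dvd 1" by (metis dvdI)
  moreover have "u + N = u * (1 - M)" unfolding M_def using v by (simp add: algebra_simps)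
  ultimately show ?thesis using mult_dvd_mono[OF assms(1)] by fastforce
qed

text \<open>If f h is a constant and deg h \<le> j, then the leading coefficient of a
  non-constant f annihilates the j-th coefficient of h: their product is the
  coefficient of t^{deg f + j} in f h, which vanishes.\<close>
lemma lead_coeff_annihilates_top_coeff:
  fixes f h :: "'a::comm_ring_1 poly"
  assumes "f * h = [:c:]" and "degree f \<ge> 1" and "degree h \<le> j"
  shows "lead_coeff f * coeff h j = 0"
proof (cases "degree h < j")
  case True
  then show ?thesis by (simp add: coeff_eq_0)
next
  case False
  with assms(3) have "degree h = j" by simp
  hence "coeff (f * h) (degree f + j) = lead_coeff f * coeff h j"
    using coeff_mult_degree_sum[of f h] by simp
  moreover have "coeff (f * h) (degree f + j) = 0"
    using assms(1,2) by (simp add: coeff_pCons split: nat.splits)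
  ultimately show ?thesis by simp
qed

text \<open>With f g = 1, deg g = m and a = lead f, induction on k shows that a^k kills
  all coefficients of g of index above m - k; for k = m + 1 this gives
  a^{m+1} g_0 = 0, while g_0 is a unit.\<close>
lemma unit_poly_lead_coeff_nilpotent:
  fixes f g :: "'a::comm_ring_1 poly"
  assumes fg: "f * g = 1" and deg: "degree f \<ge> 1"
  shows "nilpotent (lead_coeff f)"
proof -
  define a where "a = lead_coeff f"
  define m where "m = degree g"
  have killed: "\<forall>j. m < j + k \<longrightarrow> a ^ k * coeff g j = 0" for k
  proof (induction k)
    case 0
    then show ?case by (simp add: m_def coeff_eq_0)
  next
    case (Suc k)
    show ?case
    proof (intro allI impI)
      fix j assume j: "m < j + Suc k"
      show "a ^ Suc k * coeff g j = 0"
      proof (cases "m < j + k")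
        case True
        then show ?thesis using Suc.IH by (simp add: mult.assoc)
      next
        case False
        with j have "j + k = m" by simp
        define h where "h = smult (a ^ k) g"
        have "degree h \<le> j"
          by (rule degree_le) (use Suc.IH \<open>j + k = m\<close> in \<open>auto simp: h_def\<close>)
        moreover have "f * h = [:a ^ k:]"
          unfolding h_def by (metis fg mult_smult_right smult_one)
        ultimately have "a * coeff h j = 0"
          using lead_coeff_annihilates_top_coeff deg a_def by blast
        thus ?thesis by (simp add: h_def mult_ac)
      qed
    qed
  qed
  have "a ^ Suc m * coeff g 0 = 0" using killed[of "Suc m"] by simp
  moreover have "coeff f 0 * coeff g 0 = 1"
    using arg_cong[OF fg, of "\<lambda>p. coeff p 0"] by (simp add: coeff_mult)
  ultimately have "a ^ Suc m = 0"
    by (metis mult.assoc mult.commute mult_1 mult_zero_left)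
  thus ?thesis unfolding nilpotent_def a_def by blast
qed

text \<open>Induction
  on the degree: the leading coefficient a is nilpotent, and f - a t^n is again
  a unit of smaller degree with the same lower coefficients.\<close>
lemma unit_poly_coeff_nilpotent:
  fixes f :: "'a::comm_ring_1 poly"
  shows "f dvd 1 \<Longrightarrow> i \<ge> 1 \<Longrightarrow> nilpotent (coeff f i)"
proof (induction "degree f" arbitrary: f rule: less_induct)
  case less
  show ?case
  proof (cases "degree f = 0")
    case True
    then show ?thesis using less.prems by (auto simp: coeff_eq_0 nilpotent_def intro: exI[of _ 1])
  next
    case False
    define n where "n = degree f"
    define a where "a = lead_coeff f"
    obtain g where "1 = f * g" using less.prems(1) by (auto elim: dvdE)
    hence a_nil: "nilpotent a"
      using unit_poly_lead_coeff_nilpotent[of f g] False a_def by simp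
    define f' where "f' = f + monom (- a) n"
    have "nilpotent (monom (- a) n)"
    proof -
      obtain k where "a ^ k = 0" using a_nil unfolding nilpotent_def by blast
      hence "(monom (- a) n) ^ k = 0" by (simp add: monom_power power_minus')
      thus ?thesis unfolding nilpotent_def by blast
    qed
    hence unit': "f' dvd 1" unfolding f'_def using unit_plus_nilpotent less.prems(1) by blast
    have coeff': "coeff f' j = (if j = n then 0 else coeff f j)" for j
      unfolding f'_def a_def n_def by (simp add: coeff_monom)
    have "degree f' \<le> n - 1"
      by (rule degree_le) (use coeff' False n_def in \<open>auto simp: coeff_eq_0\<close>)
    hence "degree f' < degree f" using False n_def by simp
    show ?thesis
    proof (cases "i = n")
      case True
      then show ?thesis using a_nil a_def n_def by simp
    next
      case False
      then show ?thesis
        using less.hyps[OF \<open>degree f' < degree f\<close> unit' less.prems(2)] coeff' by simp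
    qed
  qed
qed

definition reflect_sign :: "'a::comm_ring_1 poly \<Rightarrow> 'a poly" where
  "reflect_sign p = pcompose p [:0, -1:]"

lemma coeff_reflect_sign: "coeff (reflect_sign p) i = (-1) ^ i * coeff p i"
  by (simp add: reflect_sign_def coeff_pcompose_linear)

lemma reflect_sign_involution: "reflect_sign (reflect_sign p) = p"
  by (rule poly_eqI) (simp add: coeff_reflect_sign power_mult_distrib[symmetric])

text \<open>Being a ring endomorphism, t \<mapsto> -t sends an invertible polynomial to an
  invertible one; applied to reflect_sign p this shows that p is a unit as soon
  as p(-t) has an inverse.\<close>
lemma unit_if_reflect_sign_invertible:
  assumes "q * reflect_sign p = 1"
  shows "p dvd 1"
proof -
  have "reflect_sign q * reflect_sign (reflect_sign p) = 1"
    using assms unfolding reflect_sign_def by (metis pcompose_1 pcompose_mult)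
  thus ?thesis by (metis dvdI mult.commute reflect_sign_involution)
qed

lemma coeff_lambda_t_poly:
  assumes "fps_of_poly p = lambda_t lam x"
  shows "coeff p i = lam i x"
  using arg_cong[OF assms, of "\<lambda>f. fps_nth f i"] by (simp add: lambda_t_def)

lemma lambda_negt_reflect_sign:
  assumes "fps_of_poly p = lambda_t lam x"
  shows "fps_of_poly (reflect_sign p) = lambda_negt lam x"
proof (rule fps_ext)
  fix i
  show "fps_nth (fps_of_poly (reflect_sign p)) i = fps_nth (lambda_negt lam x) i"
    by (simp add: coeff_reflect_sign lambda_negt_def coeff_lambda_t_poly[OF assms])
qed

theorem mainTheorem1:
  fixes lam :: "nat \<Rightarrow> 'a::comm_ring_1 \<Rightarrow> 'a" and x :: 'a
  assumes "lambda_ring lam"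
    and "\<exists>n. even_deg lam x n"
    and "\<exists>m. odd_deg lam x m"
  shows "(\<forall>i\<ge>1. \<exists>k. lam i x ^ k = 0) \<and>
         (\<forall>p. fps_of_poly p = lambda_t lam x \<longrightarrow> p dvd 1)"
proof -
  obtain q where q: "fps_of_poly q * lambda_negt lam x = 1"
    using assms(3) unfolding odd_deg_def by blast
  have unit: "p dvd 1" if p: "fps_of_poly p = lambda_t lam x" for p
  proof -
    have "fps_of_poly (q * reflect_sign p) = 1"
      using q lambda_negt_reflect_sign[OF p] by (simp add: fps_of_poly_mult)
    hence "q * reflect_sign p = 1" by (metis fps_of_poly_1 fps_of_poly_eq_iff)
    thus ?thesis by (rule unit_if_reflect_sign_invertible)
  qed
  obtain p where p: "fps_of_poly p = lambda_t lam x"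
    using assms(2) unfolding even_deg_def by blast
  have "nilpotent (lam i x)" if "i \<ge> 1" for i
    using unit_poly_coeff_nilpotent[OF unit[OF p] that] coeff_lambda_t_poly[OF p] by simp
  thus ?thesis using unit unfolding nilpotent_def by blast
qed

end
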